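(* For any $n\ge0$, $\mathsf{R}\subseteq[n]$ and $r\in\mathcal{Y}_n$, $\gamma(r)|_{\mathsf{R}}=\gamma(r|_{\mathsf{R}})$.
   Context: Permutations in one-line notation; $\mathrm{st}(a_1,..,a_p)$ is the permutation with the same relative order as distinct integers $a_i$; $\mathrm{id}_0$ is the empty permutation. For $\sigma\in\mathfrak{S}_p,\tau\in\mathfrak{S}_q$, $\sigma\vee\tau=(\sigma(1)+q,..,\sigma(p)+q,p+q+1,\tau(1),..,\tau(q))$. Trees: $\mathcal{Y}_n$ = rooted planar binary trees with $n$ internal nodes, $\mathcal{Y}_0=\{|\}$; $s\vee t$ = root with left subtree $s$, right subtree $t$; each $t\neq|$ is uniquely $t_l\vee t_r$. $\lambda(\mathrm{id}_0)=|$, $\lambda(\sigma)=\lambda(\mathrm{st}(\sigma(1..j-1)))\vee\lambda(\mathrm{st}(\sigma(j+1..n)))$ where $j=\sigma^{-1}(n)$; $\gamma(|)=\mathrm{id}_0$, $\gamma(t)=\gamma(t_l)\vee\gamma(t_r)$. For $\mathsf{R}=\{R_1<\dots<R_p\}\subseteq[n]$ and $\rho\in\mathfrak{S}_n$, $\rho|_{\mathsf{R}}=\mathrm{st}(\rho(R_1),\dots,\rho(R_p))$; for $r\in\mathcal{Y}_n$, $r|_{\mathsf{R}}=\lambda(\gamma(r)|_{\mathsf{R}})$. *)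

theory Defs
  imports Main
begin

text \<open>Permutations in one-line notation are lists of naturals; a permutation of [n]
  is a list containing 1..n exactly once.\<close>

definition st :: "nat list \<Rightarrow> nat list" where
  "st xs = map (\<lambda>x. card {y \<in> set xs. y \<le> x}) xs"

lemma length_st[simp]: "length (st xs) = length xs"
  by (simp add: st_def)

definition pvee :: "nat list \<Rightarrow> nat list \<Rightarrow> nat list" where
  "pvee \<sigma> \<tau> = map (\<lambda>x. x + length \<tau>) \<sigma> @ [length \<sigma> + length \<tau> + 1] @ \<tau>"

datatype tree = Leaf | Node tree tree

fun nodes :: "tree \<Rightarrow> nat" where
  "nodes Leaf = 0"
| "nodes (Node l r) = nodes l + nodes r + 1"

definition Y :: "nat \<Rightarrow> tree set" where
  "Y n = {t. nodes t = n}"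

text \<open>j is the (0-based) position of the value n = length xs; the min only matters
  for non-permutations and guarantees termination.\<close>
function lam :: "nat list \<Rightarrow> tree" where
  "lam xs = (if xs = [] then Leaf else
     (let j = min (length (takeWhile (\<lambda>x. x \<noteq> length xs) xs)) (length xs - 1)
      in Node (lam (st (take j xs))) (lam (st (drop (Suc j) xs)))))"
  by pat_completeness auto
termination
  by (relation "measure length") (auto simp: min_less_iff_disj)

fun gam :: "tree \<Rightarrow> nat list" where
  "gam Leaf = []"
| "gam (Node l r) = pvee (gam l) (gam r)"

definition prestr :: "nat list \<Rightarrow> nat set \<Rightarrow> nat list" where
  "prestr \<rho> R = st (map (\<lambda>i. \<rho> ! (i - 1)) (sorted_list_of_set R))"

definition trestr :: "tree \<Rightarrow> nat set \<Rightarrow> tree" where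
  "trestr r R = lam (prestr (gam r) R)"

end

theory Submission
  imports Defs
begin

text \<open>The permutation \<open>\<gamma>(r)\<close> avoids the pattern 132, since in \<open>\<sigma> \<or> \<tau>\<close> every entry
  left of the maximum exceeds every entry right of it. Restricting to the positions in
  \<open>R\<close> and standardizing preserves 132-avoidance. Conversely, splitting a 132-avoiding
  permutation at its maximum, the left block must consist of exactly the values above the
  right block, so its standardized halves reassemble to it under \<open>\<or>\<close>: thus
  \<open>\<gamma>(\<lambda>(\<pi>)) = \<pi>\<close> for every 132-avoiding \<open>\<pi>\<close>. Applied to \<open>\<pi> = \<gamma>(r)|\<^sub>R\<close> this is
  the claim.\<close>

declare lam.simps [simp del]

definition avoids_132 :: "nat list \<Rightarrow> bool" where
  "avoids_132 xs \<longleftrightarrow>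
     (\<forall>i j k. i < j \<longrightarrow> j < k \<longrightarrow> k < length xs \<longrightarrow> \<not> (xs!i < xs!k \<and> xs!k < xs!j))"

lemma strict_mono_on_rank:
  fixes S :: "nat set"
  assumes "finite S"
  shows "strict_mono_on S (\<lambda>x. card {y\<in>S. y \<le> x})"
proof (rule strict_mono_onI)
  fix x z assume "x \<in> S" "z \<in> S" "x < z"
  then have "{y\<in>S. y \<le> x} \<subseteq> {y\<in>S. y \<le> z}" "z \<in> {y\<in>S. y \<le> z} - {y\<in>S. y \<le> x}"
    by auto
  then have "{y\<in>S. y \<le> x} \<subset> {y\<in>S. y \<le> z}" by blast
  then show "card {y\<in>S. y \<le> x} < card {y\<in>S. y \<le> z}"
    using assms by (simp add: psubset_card_mono)
qed

lemma st_less_iff: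
  assumes "i < length xs" "j < length xs"
  shows "st xs ! i < st xs ! j \<longleftrightarrow> xs ! i < xs ! j"
  using assms strict_mono_on_less[OF strict_mono_on_rank[of "set xs"]] by (simp add: st_def)

lemma distinct_st: "distinct xs \<Longrightarrow> distinct (st xs)"
  using strict_mono_on_imp_inj_on[OF strict_mono_on_rank[of "set xs"]]
  by (simp add: st_def distinct_map)

lemma set_st:
  assumes "distinct xs"
  shows "set (st xs) = {1..length xs}"
proof (rule card_subset_eq)
  show "set (st xs) \<subseteq> {1..length xs}"
  proof
    fix z assume "z \<in> set (st xs)"
    then obtain x where x: "x \<in> set xs" and z: "z = card {y \<in> set xs. y \<le> x}"
      by (auto simp: st_def)
    have "0 < card {y \<in> set xs. y \<le> x}" using x by (auto simp: card_gt_0_iff)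
    moreover have "card {y \<in> set xs. y \<le> x} \<le> card (set xs)" by (rule card_mono) auto
    ultimately show "z \<in> {1..length xs}" using z assms by (simp add: distinct_card)
  qed
  show "card (set (st xs)) = card {1..length xs}"
    using distinct_st[OF assms] by (simp add: distinct_card)
qed simp

lemma st_eq_self:
  assumes "set xs = {1..length xs}"
  shows "st xs = xs"
proof -
  have "card {y \<in> {1..length xs}. y \<le> x} = x" if "x \<in> {1..length xs}" for x
  proof -
    have "{y \<in> {1..length xs}. y \<le> x} = {1..x}" using that by auto
    then show ?thesis by simp
  qed
  with assms show ?thesis by (auto simp: st_def intro!: map_idI)
qed

lemma st_map_strict_mono:
  fixes f :: "nat \<Rightarrow> nat"
  assumes "strict_mono_on (set xs) f"
  shows "st (map f xs) = st xs"
proof -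
  have "card {y \<in> f ` set xs. y \<le> f x} = card {y \<in> set xs. y \<le> x}" if "x \<in> set xs" for x
  proof -
    have "{y \<in> f ` set xs. y \<le> f x} = f ` {y \<in> set xs. y \<le> x}"
      using that strict_mono_on_less_eq[OF assms] by auto
    moreover have "inj_on f {y \<in> set xs. y \<le> x}"
      using strict_mono_on_imp_inj_on[OF assms] by (rule inj_on_subset) auto
    ultimately show ?thesis by (simp add: card_image)
  qed
  then show ?thesis by (simp add: st_def)
qed

lemma map_add_st_shifted_interval:
  assumes "set xs = {Suc b..b + length xs}"
  shows "map (\<lambda>x. x + b) (st xs) = xs"
proof -
  have "strict_mono_on (set xs) (\<lambda>x. x - b)"
    using assms by (auto intro: strict_mono_onI)
  then have "st xs = st (map (\<lambda>x. x - b) xs)" by (simp add: st_map_strict_mono)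
  also have "\<dots> = map (\<lambda>x. x - b) xs"
  proof (rule st_eq_self)
    show "set (map (\<lambda>x. x - b) xs) = {1..length (map (\<lambda>x. x - b) xs)}"
      using assms by (auto simp: image_iff intro!: bexI[where x = "_ + b"])
  qed
  finally show ?thesis using assms by (auto simp: comp_def intro!: map_idI)
qed

lemma avoids_132_st: "avoids_132 xs \<Longrightarrow> avoids_132 (st xs)"
  by (simp add: avoids_132_def st_less_iff)

lemma avoids_132_map_add: "avoids_132 xs \<Longrightarrow> avoids_132 (map (\<lambda>x. x + c) xs)"
  by (simp add: avoids_132_def)

lemma avoids_132_take: "avoids_132 xs \<Longrightarrow> avoids_132 (take n xs)"
  by (simp add: avoids_132_def)

lemma avoids_132_drop:
  assumes "avoids_132 xs"
  shows "avoids_132 (drop n xs)"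
  unfolding avoids_132_def
proof (intro allI impI)
  fix i j k assume "i < j" "j < k" "k < length (drop n xs)"
  then show "\<not> (drop n xs ! i < drop n xs ! k \<and> drop n xs ! k < drop n xs ! j)"
    using assms[unfolded avoids_132_def, rule_format, of "n + i" "n + j" "n + k"] by simp
qed

lemma avoids_132_map_nth:
  assumes "avoids_132 xs" "sorted_wrt (<) is" "\<forall>i\<in>set is. i < length xs"
  shows "avoids_132 (map ((!) xs) is)"
  unfolding avoids_132_def
proof (intro allI impI)
  fix a b c assume "a < b" "b < c" "c < length (map ((!) xs) is)"
  moreover have "is ! a < is ! b" "is ! b < is ! c" "is ! c < length xs"
    using calculation assms(2,3) by (auto simp: sorted_wrt_iff_nth_less)
  ultimately show "\<not> (map ((!) xs) is ! a < map ((!) xs) is ! c \<and>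
                     map ((!) xs) is ! c < map ((!) xs) is ! b)"
    using assms(1) unfolding avoids_132_def by simp
qed

lemma avoids_132_append_max:
  assumes "avoids_132 A" "avoids_132 B" "\<forall>a\<in>set A. \<forall>b\<in>set B. b < a"
    "\<forall>a\<in>set A. a < m" "\<forall>b\<in>set B. b < m"
  shows "avoids_132 (A @ m # B)"
  unfolding avoids_132_def
proof (intro allI impI notI)
  fix i j k assume ijk: "i < j" "j < k" "k < length (A @ m # B)"
    and pat: "(A @ m # B) ! i < (A @ m # B) ! k \<and> (A @ m # B) ! k < (A @ m # B) ! j"
  show False
  proof (cases "k < length A")
    case True
    then show False using assms(1) ijk pat unfolding avoids_132_def by (auto simp: nth_append)
  next
    case False
    have nth_B: "(A @ m # B) ! t = B ! (t - Suc (length A))" if "length A < t" for t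
      using that by (simp add: nth_append nth_Cons')
    consider "k = length A" | "length A < k" "i \<le> length A" | "length A < i"
      using False by linarith
    then show False
    proof cases
      case 1
      then have "j < length A" using ijk by simp
      then have "A ! j < m" using assms(4) by simp
      then show False using 1 pat \<open>j < length A\<close> by (simp add: nth_append)
    next
      case 2
      have "(A @ m # B) ! k \<in> set B" using 2 ijk by (simp add: nth_B)
      moreover have "(A @ m # B) ! i \<in> insert m (set A)" using 2 by (auto simp: nth_append)
      ultimately show False using pat assms(3,5) by fastforce
    next
      case 3
      define d where "d = Suc (length A)"
      have shifted: "i - d < j - d" "j - d < k - d" "k - d < length B"
        using 3 ijk unfolding d_def by auto
      show False
        using assms(2)[unfolded avoids_132_def, rule_format, OF shifted] 3 ijk pat nth_B
        unfolding d_def by auto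
    qed
  qed
qed

lemma avoids_132_max_split:
  assumes "avoids_132 (A @ m # B)" "a \<in> set A" "b \<in> set B" "b < m" "a \<noteq> b"
  shows "b < a"
proof -
  obtain i where i: "i < length A" "A ! i = a" using assms(2) by (auto simp: in_set_conv_nth)
  obtain k where k: "k < length B" "B ! k = b" using assms(3) by (auto simp: in_set_conv_nth)
  have "\<not> (a < b \<and> b < m)"
    using assms(1)[unfolded avoids_132_def, rule_format, of i "length A" "Suc (length A + k)"] i k
    by (simp add: nth_append)
  then show ?thesis using assms(4,5) by simp
qed

lemma length_gam: "length (gam t) = nodes t"
  by (induction t) (simp_all add: pvee_def)

lemma set_gam: "set (gam t) = {1..nodes t}"
proof (induction t)
  case (Node l r)
  have "set (map (\<lambda>x. x + nodes r) (gam l)) = {Suc (nodes r)..nodes l + nodes r}"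
    using Node.IH(1) by (auto simp: image_iff intro!: bexI[where x = "_ - nodes r"])
  then show ?case using Node.IH(2) by (auto simp: pvee_def length_gam)
qed simp

lemma distinct_gam: "distinct (gam t)"
  by (rule card_distinct) (simp add: set_gam length_gam)

lemma avoids_132_gam: "avoids_132 (gam t)"
proof (induction t)
  case Leaf
  then show ?case by (simp add: avoids_132_def)
next
  case (Node l r)
  then show ?case
    unfolding gam.simps pvee_def append_Cons append_Nil
    by (intro avoids_132_append_max avoids_132_map_add) (auto simp: set_gam length_gam)
qed

lemma lam_append_max:
  assumes "m \<notin> set A" "m = Suc (length A + length B)"
  shows "lam (A @ m # B) = Node (lam (st A)) (lam (st B))"
proof -
  have "takeWhile (\<lambda>x. x \<noteq> m) (A @ m # B) = A"
    using assms(1) by (auto simp: takeWhile_tail)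
  then show ?thesis using assms(2) by (subst lam.simps) (simp add: Let_def)
qed

lemma set_split_lower_upper:
  assumes "set (A @ B) = {1..length (A @ B)}" "\<forall>a\<in>set A. \<forall>b\<in>set B. b < a"
  shows "set B = {1..length B}" "set A = {Suc (length B)..length B + length A}"
proof -
  have dist: "distinct (A @ B)" using assms(1) by (intro card_distinct) simp
  have "x \<le> length B" if x: "x \<in> set B" for x
  proof -
    have "{1..x} \<subseteq> set B"
    proof
      fix y assume "y \<in> {1..x}"
      moreover have "x \<le> length (A @ B)" using x assms(1) by auto
      ultimately have "y \<in> set A \<union> set B" using assms(1) by auto
      then show "y \<in> set B" using \<open>y \<in> {1..x}\<close> x assms(2) by fastforce
    qed
    then have "card {1..x} \<le> card (set B)" by (intro card_mono) auto
    then show ?thesis using dist by (simp add: distinct_card)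
  qed
  moreover have "set B \<subseteq> {1..length (A @ B)}" using assms(1) by (metis set_append sup_ge2)
  ultimately have "set B \<subseteq> {1..length B}" by force
  moreover have "card (set B) = card {1..length B}" using dist by (simp add: distinct_card)
  ultimately show B: "set B = {1..length B}" by (intro card_subset_eq) auto
  have "set A = set (A @ B) - set B" using dist by auto
  then show "set A = {Suc (length B)..length B + length A}" using assms(1) B by auto
qed

lemma gam_lam:
  assumes "set \<pi> = {1..length \<pi>}" "avoids_132 \<pi>"
  shows "gam (lam \<pi>) = \<pi>"
  using assms
proof (induction "length \<pi>" arbitrary: \<pi> rule: less_induct)
  case less
  show ?case
  proof (cases "\<pi> = []")
    case True
    then show ?thesis by (simp add: lam.simps)
  next
    case False
    define m where "m = length \<pi>"
    have "m \<in> set \<pi>" using False less.prems(1) unfolding m_def by (simp add: Suc_le_eq)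
    then obtain A B where \<pi>: "\<pi> = A @ m # B" by (meson split_list)
    have m: "m = Suc (length A + length B)"
      using arg_cong[OF \<pi>, of length] by (simp add: m_def)
    have dist: "distinct \<pi>" using less.prems(1) by (intro card_distinct) simp
    have m_notin: "m \<notin> set A" "m \<notin> set B" and disj: "set A \<inter> set B = {}"
      using dist \<pi> by auto
    have lam_\<pi>: "lam \<pi> = Node (lam (st A)) (lam (st B))"
      unfolding \<pi> using m_notin(1) m by (rule lam_append_max)
    have "set (A @ B) = set \<pi> - {m}" using dist \<pi> by auto
    also have "\<dots> = {1..m} - {m}" using less.prems(1) m_def by simp
    also have "\<dots> = {1..length (A @ B)}" using m by auto
    finally have "set (A @ B) = {1..length (A @ B)}" .
    moreover have "\<forall>a\<in>set A. \<forall>b\<in>set B. b < a"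
    proof (intro ballI)
      fix a b assume a: "a \<in> set A" and b: "b \<in> set B"
      have "b \<in> set \<pi>" using b \<pi> by simp
      then have "b \<le> m" using less.prems(1) m_def by simp
      then have "b < m" using b m_notin(2) by (auto simp: le_less)
      moreover have "a \<noteq> b" using a b disj by blast
      ultimately show "b < a" using avoids_132_max_split less.prems(2) \<pi> a b by blast
    qed
    ultimately have set_B: "set B = {1..length B}"
      and set_A: "set A = {Suc (length B)..length B + length A}"
      by (rule set_split_lower_upper)+
    have "avoids_132 A" "avoids_132 B"
      using avoids_132_take[OF less.prems(2), of "length A"]
        avoids_132_drop[OF less.prems(2), of "Suc (length A)"] \<pi> by simp_all
    moreover have "distinct A" "distinct B" using dist \<pi> by simp_all
    ultimately have "gam (lam (st A)) = st A" "gam (lam (st B)) = st B"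
      using m m_def by (simp_all add: less.hyps set_st distinct_st avoids_132_st)
    then show ?thesis
      using \<pi> m lam_\<pi> map_add_st_shifted_interval[OF set_A] st_eq_self[OF set_B]
      by (simp add: pvee_def)
  qed
qed

lemma gam_lam_st:
  assumes "distinct xs" "avoids_132 xs"
  shows "gam (lam (st xs)) = st xs"
  using assms by (intro gam_lam) (simp_all add: set_st distinct_st avoids_132_st)

lemma gam_lam_prestr:
  assumes "distinct \<rho>" "avoids_132 \<rho>" "R \<subseteq> {1..length \<rho>}"
  shows "gam (lam (prestr \<rho> R)) = prestr \<rho> R"
proof -
  define idx where "idx = map (\<lambda>i. i - 1) (sorted_list_of_set R)"
  have fin: "finite R" using assms(3) by (rule finite_subset) simp
  have idx_sorted: "sorted_wrt (<) idx"
    unfolding idx_def sorted_wrt_map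
  proof (rule sorted_wrt_mono_rel[of _ "(<)"])
    show "sorted_wrt (<) (sorted_list_of_set R)" by simp
  qed (use assms(3) fin in \<open>auto intro!: diff_less_mono\<close>)
  have idx_bound: "\<forall>i\<in>set idx. i < length \<rho>"
    unfolding idx_def by (auto simp: fin dest!: subsetD[OF assms(3)])
  have restr: "prestr \<rho> R = st (map ((!) \<rho>) idx)"
    unfolding prestr_def idx_def by (simp add: comp_def)
  have "distinct (map ((!) \<rho>) idx)"
    using idx_sorted idx_bound assms(1)
    by (simp add: distinct_map inj_on_nth strict_sorted_iff)
  moreover have "avoids_132 (map ((!) \<rho>) idx)"
    using avoids_132_map_nth[OF assms(2) idx_sorted idx_bound] .
  ultimately show ?thesis unfolding restr by (rule gam_lam_st)
qed

theorem lemma8p5: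
  fixes n :: nat and R :: "nat set" and r :: tree
  assumes "R \<subseteq> {1..n}" and "r \<in> Y n"
  shows "prestr (gam r) R = gam (trestr r R)"
proof -
  have "length (gam r) = n" using assms(2) by (simp add: Y_def length_gam)
  then have "R \<subseteq> {1..length (gam r)}" using assms(1) by simp
  then show ?thesis
    unfolding trestr_def by (rule gam_lam_prestr[OF distinct_gam avoids_132_gam, symmetric])
qed

end
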